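(* Let $\boldsymbol Z$ be an integrable random vector in $\mathbb R^d$ whose distribution is invariant under all orthogonal transformations, and let $W$ be a discrete random variable jointly distributed with $\boldsymbol Z$. Then for every $w$ in the support of $W$ and every real $\theta$, $$\big\|\mathbb E(\boldsymbol Z\mathbf 1_{W=w})\big\|^2\le\big[\theta\,\mathbb P(W=w)+\mathbb E(Z_1-\theta)_+\big]^2,$$ where $Z_1$ is the first coordinate of $\boldsymbol Z$ and $x_+=\max(x,0)$. *)

theory Defs
  imports "HOL-Probability.Probability"
begin

end

theory Submission
  imports Defs
begin

text \<open>Rotate so that \<open>v = E(Z 1\<^sub>A)\<close> points along the \<open>i\<close>-th axis: then \<open>\<parallel>v\<parallel>\<close> is the
  \<open>i\<close>-th coordinate of \<open>E(gZ 1\<^sub>A)\<close>, which the pointwise bound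
  \<open>1\<^sub>A x \<le> \<theta> 1\<^sub>A + (x - \<theta>)\<^sub>+\<close> controls by \<open>\<theta> P(A) + E((gZ)\<^sub>i - \<theta>)\<^sub>+\<close>.
  Rotation invariance replaces \<open>gZ\<close> by \<open>Z\<close> in the last expectation.\<close>

lemma integral_indicator_mult_le_threshold:
  fixes X :: "'a \<Rightarrow> real"
  assumes "finite_measure M" and X: "integrable M X" and A: "A \<in> sets M"
  shows "(\<integral>x. indicator A x * X x \<partial>M) \<le> \<theta> * measure M A + (\<integral>x. max (X x - \<theta>) 0 \<partial>M)"
proof -
  interpret finite_measure M by fact
  have int_ind: "integrable M (\<lambda>x. \<theta> * indicator A x)"
    using A by (intro integrable_mult_right) (simp add: emeasure_eq_measure)
  have int_pos: "integrable M (\<lambda>x. max (X x - \<theta>) 0)"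
    using X by auto
  have "(\<integral>x. indicator A x * X x \<partial>M) \<le> (\<integral>x. \<theta> * indicator A x + max (X x - \<theta>) 0 \<partial>M)"
    using integrable_real_mult_indicator[OF A(1) X] int_ind int_pos
    by (intro integral_mono) (auto simp: mult.commute split: split_indicator)
  also have "\<dots> = \<theta> * measure M A + (\<integral>x. max (X x - \<theta>) 0 \<partial>M)"
    using int_ind int_pos A by simp
  finally show ?thesis .
qed

lemma integral_comp_eq_of_distr_eq:
  fixes h :: "'b::topological_space \<Rightarrow> 'c::{banach, second_countable_topology}"
  assumes "X \<in> borel_measurable M" "Y \<in> borel_measurable M"
    and "distr M borel X = distr M borel Y"
    and "h \<in> borel_measurable borel"
  shows "(\<integral>x. h (X x) \<partial>M) = (\<integral>x. h (Y x) \<partial>M)"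
  using integral_distr[OF assms(1,4)] integral_distr[OF assms(2,4)] assms(3) by simp

lemma orthogonal_transformation_onto_axis:
  fixes v :: "real ^ 'n" and i :: 'n
  obtains g where "orthogonal_transformation g" "g v $ i = norm v"
proof -
  have "norm v = norm (norm v *\<^sub>R (axis i 1 :: real ^ 'n))"
    by simp
  then obtain g :: "real ^ 'n \<Rightarrow> real ^ 'n"
    where "orthogonal_transformation g" "g v = norm v *\<^sub>R axis i 1"
    by (rule orthogonal_transformation_exists) blast
  then show ?thesis
    by (intro that) auto
qed

theorem mainTheorem13:
  fixes M :: "'a measure"
    and Z :: "'a \<Rightarrow> real ^ 'n"
    and W :: "'a \<Rightarrow> 'b"
    and i :: 'n
    and w :: 'b
    and \<theta> :: real
  assumes "prob_space M"
    and "Z \<in> borel_measurable M"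
    and "integrable M Z"
    and "\<And>f. orthogonal_transformation f \<Longrightarrow>
           distr M borel (\<lambda>x. f (Z x)) = distr M borel Z"
    and "W \<in> measurable M (count_space UNIV)"
    and "countable (W ` space M)"
    and "measure M {x \<in> space M. W x = w} > 0"
  shows "(norm (integral\<^sup>L M (\<lambda>x. indicator {y \<in> space M. W y = w} x *\<^sub>R Z x)))\<^sup>2
         \<le> (\<theta> * measure M {x \<in> space M. W x = w}
             + integral\<^sup>L M (\<lambda>x. max (Z x $ i - \<theta>) 0))\<^sup>2"
proof -
  interpret prob_space M by fact
  define A where "A = {y \<in> space M. W y = w}"
  have A: "A \<in> sets M"
    using measurable_sets[OF assms(5), of "{w}"] by (simp add: A_def vimage_def Int_def conj_commute)
  define v where "v = (\<integral>x. indicator A x *\<^sub>R Z x \<partial>M)"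
  obtain g where g: "orthogonal_transformation g" "g v $ i = norm v"
    by (rule orthogonal_transformation_onto_axis)
  define L where "L y = g y $ i" for y
  have L: "bounded_linear L"
    using g(1) unfolding L_def orthogonal_transformation_def linear_conv_bounded_linear
    by (intro bounded_linear_compose[OF bounded_linear_vec_nth]) simp
  have LZ: "integrable M (\<lambda>x. L (Z x))"
    by (rule integrable_bounded_linear[OF L assms(3)])
  have "norm v = (\<integral>x. indicator A x * L (Z x) \<partial>M)"
    using g(2) integral_bounded_linear[OF L integrable_mult_indicator[OF A assms(3)]]
    by (simp add: v_def L_def linear_scale[OF orthogonal_transformation_linear[OF g(1)]])
  also have "\<dots> \<le> \<theta> * measure M A + (\<integral>x. max (L (Z x) - \<theta>) 0 \<partial>M)"
    using integral_indicator_mult_le_threshold[OF finite_measure_axioms LZ A] by simp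
  also have "(\<integral>x. max (L (Z x) - \<theta>) 0 \<partial>M) = (\<integral>x. max (Z x $ i - \<theta>) 0 \<partial>M)"
    using integral_comp_eq_of_distr_eq[OF _ assms(2) assms(4)[OF g(1)], of "\<lambda>y. max (y $ i - \<theta>) 0"]
      borel_measurable_integrable[OF integrable_bounded_linear[OF _ assms(3)], of g] g(1)
    by (simp add: L_def orthogonal_transformation_def linear_conv_bounded_linear)
  finally have "norm v \<le> \<theta> * measure M A + (\<integral>x. max (Z x $ i - \<theta>) 0 \<partial>M)" .
  then show ?thesis
    unfolding v_def A_def by (intro power_mono) auto
qed

end
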